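(* Assume (A2) and a congestion game payoff structure with continuously differentiable, nonincreasing resource rewards $w_r$. Then the set of mixed stationary Nash equilibria of the mean field game is compact and convex. If moreover every $w_r$ is strictly decreasing, the equilibrium resource flows $\sigma_r$, $r\in\mathcal R$, are the same at every mixed stationary Nash equilibrium.
   Context: Model: classes $c\in[C]$ with masses $m^c>0$, finite state sets $\mathcal S^c$, nonempty finite admissible action sets $\mathcal A^c(s)$, transition kernels $\phi^c(\cdot\mid s,a)$. $\mathcal U^c_D$ = deterministic policies (maps $s\mapsto u(s)\in\mathcal A^c(s)$). $\phi^{c,u}_{ss'}=\phi^c(s\mid s',u(s'))$. (A2): for all $c,u\in\mathcal U^c_D$, $\phi^{c,u}$ has exactly one recurrent communicating class; $\eta^{c,u}$ is the unique stationary distribution of the continuous-time chain with generator $\lambda(\phi^{c,u}-I)$. Congestion game payoff structure: common action rate $\lambda>0$; finite resource set $\mathcal R$; each action is a subset of $\mathcal R$; $w_r:\mathbb R_{\ge0}\to\mathbb R$; for a state-action distribution $\nu$ the flow is $\sigma_r=\lambda\sum_c\sum_s\sum_{a\ni r}\nu^c[s,a]$ and $r^c(s,a,\nu)=\sum_{r\in a}w_r(\sigma_r)$. State-policy distributions: $X=\prod_c\{\mu^c\in\mathbb R_{\ge0}^{\mathcal S^c\times\mathcal U^c_D}:\sum\mu^c=m^c\}$; $\mu^c_{\mathcal S\times\mathcal A}[s,a]=\sum_u\mu^c[s,u]\mathbf 1[u(s)=a]$; $\mu^c[\mathcal S^c,u]=\sum_s\mu^c[s,u]$; $F^c_u(\mu)=\sum_s\eta^{c,u}(s)r^c(s,u(s),\mu_{\mathcal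 S\times\mathcal A})$. MSNE: $\mu\in X$ such that for all $c,u$: (i) $\mu^c[\mathcal S^c,u]>0\Rightarrow F^c_u(\mu)\ge F^c_v(\mu)\ \forall v\in\mathcal U^c_D$; (ii) $\mu^c[s,u]=\eta^{c,u}(s)\mu^c[\mathcal S^c,u]$ for all $s$. The flows at an MSNE $\mu$ are $\sigma_r$ computed from $\mu_{\mathcal S\times\mathcal A}$. *)

theory Defs
  imports "HOL-Analysis.Analysis"
begin

(* Conventions:
   'c  : finite type of classes,  'r : finite type of resources (the resource set R = UNIV),
   'st : finite ambient type of states; class c has state set S c,
   actions are subsets of R:  A c s :: 'r set set  (admissible actions at state s),
   phi c s a s' = probability of moving from s to s' in class c under action a,
   i.e. phi^c(s' | s, a). *)

text \<open>Deterministic policies of one class: maps on the state set into admissible actions,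
  extended by the default value {} outside the state set (canonical representative).\<close>
definition policies :: "'st set \<Rightarrow> ('st \<Rightarrow> 'r set set) \<Rightarrow> ('st \<Rightarrow> 'r set) set" where
  "policies S A = {u. (\<forall>s\<in>S. u s \<in> A s) \<and> (\<forall>s. s \<notin> S \<longrightarrow> u s = {})}"

definition policy_kernel :: "('st \<Rightarrow> 'a \<Rightarrow> 'st \<Rightarrow> real) \<Rightarrow> ('st \<Rightarrow> 'a) \<Rightarrow> 'st \<Rightarrow> 'st \<Rightarrow> real" where
  "policy_kernel phic u = (\<lambda>s s'. phic s (u s) s')"

definition reach :: "'st set \<Rightarrow> ('st \<Rightarrow> 'st \<Rightarrow> real) \<Rightarrow> ('st \<times> 'st) set" where
  "reach S P = {(s, t). s \<in> S \<and> t \<in> S \<and> P s t > 0}\<^sup>*"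

definition communicating_class :: "'st set \<Rightarrow> ('st \<Rightarrow> 'st \<Rightarrow> real) \<Rightarrow> 'st set \<Rightarrow> bool" where
  "communicating_class S P C \<longleftrightarrow>
     (\<exists>s\<in>S. C = {t\<in>S. (s, t) \<in> reach S P \<and> (t, s) \<in> reach S P})"

definition closed_class :: "'st set \<Rightarrow> ('st \<Rightarrow> 'st \<Rightarrow> real) \<Rightarrow> 'st set \<Rightarrow> bool" where
  "closed_class S P C \<longleftrightarrow> (\<forall>x\<in>C. \<forall>y\<in>S. P x y > 0 \<longrightarrow> y \<in> C)"

text \<open>For a finite chain, a communicating class is recurrent iff it is closed.\<close>
definition recurrent_class :: "'st set \<Rightarrow> ('st \<Rightarrow> 'st \<Rightarrow> real) \<Rightarrow> 'st set \<Rightarrow> bool" where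
  "recurrent_class S P C \<longleftrightarrow> communicating_class S P C \<and> closed_class S P C"

definition one_recurrent_class :: "'st set \<Rightarrow> ('st \<Rightarrow> 'st \<Rightarrow> real) \<Rightarrow> bool" where
  "one_recurrent_class S P \<longleftrightarrow> (\<exists>!C. recurrent_class S P C)"

text \<open>Stationary distribution of the continuous-time chain with generator lam (P - I).\<close>
definition ctmc_stationary :: "real \<Rightarrow> 'st set \<Rightarrow> ('st \<Rightarrow> 'st \<Rightarrow> real) \<Rightarrow> ('st \<Rightarrow> real) \<Rightarrow> bool" where
  "ctmc_stationary lam S P \<eta> \<longleftrightarrow>
     (\<forall>s. s \<notin> S \<longrightarrow> \<eta> s = 0) \<and> (\<forall>s\<in>S. \<eta> s \<ge> 0) \<and> sum \<eta> S = 1 \<and>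
     (\<forall>t\<in>S. (\<Sum>s\<in>S. \<eta> s * (lam * (P s t - (if s = t then 1 else 0)))) = 0)"

definition stat_dist :: "real \<Rightarrow> 'st set \<Rightarrow> ('st \<Rightarrow> 'st \<Rightarrow> real) \<Rightarrow> 'st \<Rightarrow> real" where
  "stat_dist lam S P = (THE \<eta>. ctmc_stationary lam S P \<eta>)"

text \<open>State-policy distributions live in real^('c \<times> 'st \<times> policy); coordinates that are not
  (class, state, admissible policy) triples are forced to be 0.\<close>
definition valid_idx :: "('c \<Rightarrow> 'st set) \<Rightarrow> ('c \<Rightarrow> 'st \<Rightarrow> 'r set set)
    \<Rightarrow> 'c \<times> 'st \<times> ('st \<Rightarrow> 'r set) \<Rightarrow> bool" where
  "valid_idx S A i = (case i of (c, s, u) \<Rightarrow> s \<in> S c \<and> u \<in> policies (S c) (A c))"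

definition state_policy_dists :: "('c::finite \<Rightarrow> 'st::finite set) \<Rightarrow> ('c \<Rightarrow> 'st \<Rightarrow> 'r::finite set set)
    \<Rightarrow> ('c \<Rightarrow> real) \<Rightarrow> (real ^ ('c \<times> 'st \<times> ('st \<Rightarrow> 'r set))) set" where
  "state_policy_dists S A m = {\<mu>.
     (\<forall>i. \<not> valid_idx S A i \<longrightarrow> \<mu> $ i = 0) \<and>
     (\<forall>i. valid_idx S A i \<longrightarrow> \<mu> $ i \<ge> 0) \<and>
     (\<forall>c. (\<Sum>s\<in>S c. \<Sum>u\<in>policies (S c) (A c). \<mu> $ (c, s, u)) = m c)}"

definition sa_dist :: "('c::finite \<Rightarrow> 'st::finite set) \<Rightarrow> ('c \<Rightarrow> 'st \<Rightarrow> 'r::finite set set)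
    \<Rightarrow> real ^ ('c \<times> 'st \<times> ('st \<Rightarrow> 'r set)) \<Rightarrow> 'c \<Rightarrow> 'st \<Rightarrow> 'r set \<Rightarrow> real" where
  "sa_dist S A \<mu> c s a = (\<Sum>u\<in>policies (S c) (A c). if u s = a then \<mu> $ (c, s, u) else 0)"

definition flow :: "real \<Rightarrow> ('c::finite \<Rightarrow> 'st set) \<Rightarrow> ('c \<Rightarrow> 'st \<Rightarrow> 'r set set)
    \<Rightarrow> ('c \<Rightarrow> 'st \<Rightarrow> 'r set \<Rightarrow> real) \<Rightarrow> 'r \<Rightarrow> real" where
  "flow lam S A \<nu> r = lam * (\<Sum>c\<in>UNIV. \<Sum>s\<in>S c. \<Sum>a\<in>{a\<in>A c s. r \<in> a}. \<nu> c s a)"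

definition cg_reward :: "real \<Rightarrow> ('c::finite \<Rightarrow> 'st set) \<Rightarrow> ('c \<Rightarrow> 'st \<Rightarrow> 'r::finite set set)
    \<Rightarrow> ('r \<Rightarrow> real \<Rightarrow> real) \<Rightarrow> ('c \<Rightarrow> 'st \<Rightarrow> 'r set \<Rightarrow> real) \<Rightarrow> 'r set \<Rightarrow> real" where
  "cg_reward lam S A w \<nu> a = (\<Sum>r\<in>a. w r (flow lam S A \<nu> r))"

definition Fval :: "real \<Rightarrow> ('c::finite \<Rightarrow> 'st::finite set) \<Rightarrow> ('c \<Rightarrow> 'st \<Rightarrow> 'r::finite set set)
    \<Rightarrow> ('c \<Rightarrow> 'st \<Rightarrow> 'r set \<Rightarrow> 'st \<Rightarrow> real) \<Rightarrow> ('r \<Rightarrow> real \<Rightarrow> real)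
    \<Rightarrow> real ^ ('c \<times> 'st \<times> ('st \<Rightarrow> 'r set)) \<Rightarrow> 'c \<Rightarrow> ('st \<Rightarrow> 'r set) \<Rightarrow> real" where
  "Fval lam S A \<phi> w \<mu> c u =
     (\<Sum>s\<in>S c. stat_dist lam (S c) (policy_kernel (\<phi> c) u) s * cg_reward lam S A w (sa_dist S A \<mu>) (u s))"

definition policy_mass :: "('c::finite \<Rightarrow> 'st::finite set)
    \<Rightarrow> real ^ ('c \<times> 'st \<times> ('st \<Rightarrow> 'r::finite set)) \<Rightarrow> 'c \<Rightarrow> ('st \<Rightarrow> 'r set) \<Rightarrow> real" where
  "policy_mass S \<mu> c u = (\<Sum>s\<in>S c. \<mu> $ (c, s, u))"

definition MSNE :: "real \<Rightarrow> ('c::finite \<Rightarrow> 'st::finite set) \<Rightarrow> ('c \<Rightarrow> 'st \<Rightarrow> 'r::finite set set)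
    \<Rightarrow> ('c \<Rightarrow> 'st \<Rightarrow> 'r set \<Rightarrow> 'st \<Rightarrow> real) \<Rightarrow> ('c \<Rightarrow> real) \<Rightarrow> ('r \<Rightarrow> real \<Rightarrow> real)
    \<Rightarrow> real ^ ('c \<times> 'st \<times> ('st \<Rightarrow> 'r set)) \<Rightarrow> bool" where
  "MSNE lam S A \<phi> m w \<mu> \<longleftrightarrow> \<mu> \<in> state_policy_dists S A m \<and>
     (\<forall>c. \<forall>u\<in>policies (S c) (A c).
        (policy_mass S \<mu> c u > 0 \<longrightarrow>
           (\<forall>v\<in>policies (S c) (A c). Fval lam S A \<phi> w \<mu> c u \<ge> Fval lam S A \<phi> w \<mu> c v)) \<and>
        (\<forall>s\<in>S c. \<mu> $ (c, s, u) =
           stat_dist lam (S c) (policy_kernel (\<phi> c) u) s * policy_mass S \<mu> c u))"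

end

(* Stationarity of nu turns the total payoff  lam * sum_c sum_u nu^c[S,u] F^c_u(mu)  into the
   pairing  sum_r w_r(sigma_r(mu)) sigma_r(nu),  and the Nash condition of mu bounds it by the same
   pairing with nu replaced by mu.  Adding this variational inequality for two equilibria mu, nu gives
   sum_r (w_r(sigma_r(mu)) - w_r(sigma_r(nu))) (sigma_r(nu) - sigma_r(mu)) <= 0, where every term is
   nonnegative because w_r is nonincreasing.  Hence for each resource either the two flows agree or
   w_r takes the same value at both, and then on the whole segment between them.  So all equilibria
   and all their convex combinations induce the same payoffs F, which makes the Nash condition
   convex, while the mass and stationarity constraints are linear.  The equilibrium set is closed
   since w_r is continuous, and bounded since masses are.  Strictly decreasing w_r exclude the
   second alternative, so the flows coincide. *)

theory Submission
  imports Defs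
begin

definition resource_flow :: "real \<Rightarrow> ('c::finite \<Rightarrow> 'st::finite set) \<Rightarrow> ('c \<Rightarrow> 'st \<Rightarrow> 'r::finite set set)
    \<Rightarrow> real ^ ('c \<times> 'st \<times> ('st \<Rightarrow> 'r set)) \<Rightarrow> 'r \<Rightarrow> real" where
  "resource_flow lam S A \<mu> r =
     lam * (\<Sum>c\<in>UNIV. \<Sum>s\<in>S c. \<Sum>u\<in>policies (S c) (A c). if r \<in> u s then \<mu> $ (c, s, u) else 0)"

definition optimal_on_support :: "real \<Rightarrow> ('c::finite \<Rightarrow> 'st::finite set) \<Rightarrow> ('c \<Rightarrow> 'st \<Rightarrow> 'r::finite set set)
    \<Rightarrow> ('c \<Rightarrow> 'st \<Rightarrow> 'r set \<Rightarrow> 'st \<Rightarrow> real) \<Rightarrow> ('r \<Rightarrow> real \<Rightarrow> real)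
    \<Rightarrow> real ^ ('c \<times> 'st \<times> ('st \<Rightarrow> 'r set)) \<Rightarrow> bool" where
  "optimal_on_support lam S A \<phi> w \<mu> \<longleftrightarrow>
     (\<forall>c. \<forall>u\<in>policies (S c) (A c). policy_mass S \<mu> c u > 0 \<longrightarrow>
        (\<forall>v\<in>policies (S c) (A c). Fval lam S A \<phi> w \<mu> c v \<le> Fval lam S A \<phi> w \<mu> c u))"

definition stationary_marginals :: "real \<Rightarrow> ('c::finite \<Rightarrow> 'st::finite set) \<Rightarrow> ('c \<Rightarrow> 'st \<Rightarrow> 'r::finite set set)
    \<Rightarrow> ('c \<Rightarrow> 'st \<Rightarrow> 'r set \<Rightarrow> 'st \<Rightarrow> real) \<Rightarrow> real ^ ('c \<times> 'st \<times> ('st \<Rightarrow> 'r set)) \<Rightarrow> bool" where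
  "stationary_marginals lam S A \<phi> \<mu> \<longleftrightarrow>
     (\<forall>c. \<forall>u\<in>policies (S c) (A c). \<forall>s\<in>S c.
        \<mu> $ (c, s, u) = stat_dist lam (S c) (policy_kernel (\<phi> c) u) s * policy_mass S \<mu> c u)"

lemma MSNE_iff:
  "MSNE lam S A \<phi> m w \<mu> \<longleftrightarrow> \<mu> \<in> state_policy_dists S A m \<and>
     optimal_on_support lam S A \<phi> w \<mu> \<and> stationary_marginals lam S A \<phi> \<mu>"
  unfolding MSNE_def optimal_on_support_def stationary_marginals_def by blast

lemma flow_sa_dist: "flow lam S A (sa_dist S A \<mu>) r = resource_flow lam S A \<mu> r"
proof -
  have "(\<Sum>a\<in>{a\<in>A c s. r \<in> a}. \<Sum>u\<in>policies (S c) (A c). if u s = a then \<mu> $ (c, s, u) else 0)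
      = (\<Sum>u\<in>policies (S c) (A c). if r \<in> u s then \<mu> $ (c, s, u) else 0)" if "s \<in> S c" for c s
    using that by (subst sum.swap) (auto intro!: sum.cong simp: policies_def)
  then show ?thesis unfolding flow_def resource_flow_def sa_dist_def by simp
qed

lemma Fval_eq_resource_flow:
  "Fval lam S A \<phi> w \<mu> c u = (\<Sum>s\<in>S c. stat_dist lam (S c) (policy_kernel (\<phi> c) u) s *
     (\<Sum>r\<in>u s. w r (resource_flow lam S A \<mu> r)))"
  unfolding Fval_def cg_reward_def flow_sa_dist ..

lemma resource_flow_combination:
  "resource_flow lam S A (p *\<^sub>R \<mu> + q *\<^sub>R \<nu>) r = p * resource_flow lam S A \<mu> r + q * resource_flow lam S A \<nu> r"
proof -
  have "(if P then p * x + q * y else 0) = p * (if P then x else 0) + q * (if P then y else 0)"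
    for P and x y :: real
    by simp
  then show ?thesis
    unfolding resource_flow_def vector_add_component vector_scaleR_component real_scaleR_def
    by (simp only: sum.distrib flip: sum_distrib_left) (simp add: algebra_simps)
qed

lemma policy_mass_combination:
  "policy_mass S (p *\<^sub>R \<mu> + q *\<^sub>R \<nu>) c u = p * policy_mass S \<mu> c u + q * policy_mass S \<nu> c u"
  unfolding policy_mass_def by (simp add: sum.distrib sum_distrib_left)

lemma sum_weighted_resource_flow:
  fixes W :: "'r::finite \<Rightarrow> real" and \<nu> :: "real ^ ('c::finite \<times> 'st::finite \<times> ('st \<Rightarrow> 'r set))"
  shows "(\<Sum>r\<in>UNIV. W r * resource_flow lam S A \<nu> r) =
     lam * (\<Sum>c\<in>UNIV. \<Sum>s\<in>S c. \<Sum>u\<in>policies (S c) (A c). \<nu> $ (c, s, u) * sum W (u s))"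
proof -
  have "\<nu> $ (c, s, u) * sum W (u s) = (\<Sum>r\<in>UNIV. W r * (if r \<in> u s then \<nu> $ (c, s, u) else 0))"
    for c s u
    by (simp add: sum_distrib_left sum_distrib_right mult.commute if_distrib[of "times _"] sum.If_cases)
  then have "lam * (\<Sum>c\<in>UNIV. \<Sum>s\<in>S c. \<Sum>u\<in>policies (S c) (A c). \<nu> $ (c, s, u) * sum W (u s))
      = lam * (\<Sum>r\<in>UNIV. \<Sum>c\<in>UNIV. \<Sum>s\<in>S c. \<Sum>u\<in>policies (S c) (A c).
          W r * (if r \<in> u s then \<nu> $ (c, s, u) else 0))"
    by (simp only: sum.swap[where B = "UNIV :: 'r set"])
  also have "\<dots> = (\<Sum>r\<in>UNIV. W r * resource_flow lam S A \<nu> r)"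
    by (simp add: resource_flow_def sum_distrib_left mult.left_commute)
  finally show ?thesis ..
qed

lemma state_policy_dists_nonneg: "\<mu> \<in> state_policy_dists S A m \<Longrightarrow> 0 \<le> \<mu> $ i"
  unfolding state_policy_dists_def by (cases i; cases "valid_idx S A i") auto

lemma state_policy_dists_le_mass:
  assumes \<mu>: "\<mu> \<in> state_policy_dists S A m"
  shows "\<mu> $ (c, s, u) \<le> m c"
proof (cases "s \<in> S c \<and> u \<in> policies (S c) (A c)")
  case True
  have "\<mu> $ (c, s, u) \<le> (\<Sum>u'\<in>policies (S c) (A c). \<mu> $ (c, s, u'))"
    using True by (intro member_le_sum) (auto intro: state_policy_dists_nonneg[OF \<mu>])
  also have "\<dots> \<le> (\<Sum>s'\<in>S c. \<Sum>u'\<in>policies (S c) (A c). \<mu> $ (c, s', u'))"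
    using True by (intro member_le_sum[where f = "\<lambda>s'. \<Sum>u'\<in>_. \<mu> $ (c, s', u')"] sum_nonneg)
      (auto intro: state_policy_dists_nonneg[OF \<mu>])
  also have "\<dots> = m c"
    using \<mu> unfolding state_policy_dists_def by blast
  finally show ?thesis .
next
  case False
  then have "\<not> valid_idx S A (c, s, u)"
    by (simp add: valid_idx_def)
  then have "\<mu> $ (c, s, u) = 0"
    using \<mu> unfolding state_policy_dists_def by blast
  also have "0 \<le> (\<Sum>s'\<in>S c. \<Sum>u'\<in>policies (S c) (A c). \<mu> $ (c, s', u'))"
    by (intro sum_nonneg state_policy_dists_nonneg[OF \<mu>])
  also have "\<dots> = m c"
    using \<mu> unfolding state_policy_dists_def by blast
  finally show ?thesis .
qed

lemma policy_mass_nonneg: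
  "\<mu> \<in> state_policy_dists S A m \<Longrightarrow> u \<in> policies (S c) (A c) \<Longrightarrow> 0 \<le> policy_mass S \<mu> c u"
  unfolding policy_mass_def by (intro sum_nonneg) (auto intro: state_policy_dists_nonneg)

lemma sum_policy_mass:
  "\<mu> \<in> state_policy_dists S A m \<Longrightarrow> (\<Sum>u\<in>policies (S c) (A c). policy_mass S \<mu> c u) = m c"
  unfolding policy_mass_def state_policy_dists_def by (subst sum.swap) auto

lemma resource_flow_nonneg:
  "0 \<le> lam \<Longrightarrow> \<mu> \<in> state_policy_dists S A m \<Longrightarrow> 0 \<le> resource_flow lam S A \<mu> r"
  unfolding resource_flow_def
  by (intro mult_nonneg_nonneg sum_nonneg) (auto intro: state_policy_dists_nonneg)

lemma closed_state_policy_dists: "closed (state_policy_dists S A m)"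
  unfolding state_policy_dists_def
  by (intro closed_Collect_conj closed_Collect_all closed_Collect_imp open_Collect_const
      closed_Collect_eq closed_Collect_le continuous_intros)

lemma bounded_state_policy_dists: "bounded (state_policy_dists S A m)"
proof (rule bounded_subset)
  show "state_policy_dists S A m \<subseteq> cbox 0 (\<chi> i. m (fst i))"
    by (auto simp: mem_box_cart state_policy_dists_le_mass state_policy_dists_nonneg)
qed (rule bounded_cbox)

lemma convex_state_policy_dists: "convex (state_policy_dists S A m)"
proof (rule convexI)
  fix \<mu> \<nu> :: "real ^ _" and p q :: real
  assume "\<mu> \<in> state_policy_dists S A m" "\<nu> \<in> state_policy_dists S A m" "0 \<le> p" "0 \<le> q" "p + q = 1"
  then show "p *\<^sub>R \<mu> + q *\<^sub>R \<nu> \<in> state_policy_dists S A m"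
    unfolding state_policy_dists_def
    by (simp add: sum.distrib flip: sum_distrib_left distrib_right)
qed

lemma closed_stationary_marginals: "closed {\<mu>. stationary_marginals lam S A \<phi> \<mu>}"
  unfolding stationary_marginals_def policy_mass_def Ball_def
  by (intro closed_Collect_all closed_Collect_imp open_Collect_const closed_Collect_eq
      continuous_intros)

lemma convex_stationary_marginals: "convex {\<mu>. stationary_marginals lam S A \<phi> \<mu>}"
  by (rule convexI) (auto simp: stationary_marginals_def policy_mass_combination algebra_simps)

lemma payoff_pairing_eq_reward_flow:
  assumes "stationary_marginals lam S A \<phi> \<nu>"
  shows "lam * (\<Sum>c\<in>UNIV. \<Sum>u\<in>policies (S c) (A c). policy_mass S \<nu> c u * Fval lam S A \<phi> w \<mu> c u)
    = (\<Sum>r\<in>UNIV. w r (resource_flow lam S A \<mu> r) * resource_flow lam S A \<nu> r)"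
proof -
  let ?W = "\<lambda>r. w r (resource_flow lam S A \<mu> r)"
  have "policy_mass S \<nu> c u * Fval lam S A \<phi> w \<mu> c u = (\<Sum>s\<in>S c. \<nu> $ (c, s, u) * sum ?W (u s))"
    if "u \<in> policies (S c) (A c)" for c u
    using assms that unfolding stationary_marginals_def Fval_eq_resource_flow sum_distrib_left
    by (auto intro!: sum.cong simp: ac_simps)
  then have "(\<Sum>c\<in>UNIV. \<Sum>u\<in>policies (S c) (A c). policy_mass S \<nu> c u * Fval lam S A \<phi> w \<mu> c u)
      = (\<Sum>c\<in>UNIV. \<Sum>u\<in>policies (S c) (A c). \<Sum>s\<in>S c. \<nu> $ (c, s, u) * sum ?W (u s))"
    by simp
  also have "\<dots> = (\<Sum>c\<in>UNIV. \<Sum>s\<in>S c. \<Sum>u\<in>policies (S c) (A c). \<nu> $ (c, s, u) * sum ?W (u s))"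
    by (intro sum.cong refl sum.swap)
  finally show ?thesis
    by (simp add: sum_weighted_resource_flow)
qed

lemma optimal_on_support_payoff_le:
  assumes opt: "optimal_on_support lam S A \<phi> w \<mu>"
    and \<mu>: "\<mu> \<in> state_policy_dists S A m" and \<nu>: "\<nu> \<in> state_policy_dists S A m" and "0 < m c"
  shows "(\<Sum>u\<in>policies (S c) (A c). policy_mass S \<nu> c u * Fval lam S A \<phi> w \<mu> c u)
       \<le> (\<Sum>u\<in>policies (S c) (A c). policy_mass S \<mu> c u * Fval lam S A \<phi> w \<mu> c u)"
proof -
  let ?P = "policies (S c) (A c)" and ?F = "Fval lam S A \<phi> w \<mu> c"
  obtain u\<^sub>0 where u\<^sub>0: "u\<^sub>0 \<in> ?P" "0 < policy_mass S \<mu> c u\<^sub>0"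
    using sum_policy_mass[OF \<mu>, of c] \<open>0 < m c\<close>
    by (metis (no_types, lifting) not_le sum_nonpos)
  have F_le: "?F v \<le> ?F u\<^sub>0" if "v \<in> ?P" for v
    using opt u\<^sub>0 that unfolding optimal_on_support_def by blast
  have F_support: "policy_mass S \<mu> c u * ?F u = policy_mass S \<mu> c u * ?F u\<^sub>0" if "u \<in> ?P" for u
  proof (cases "0 < policy_mass S \<mu> c u")
    case True
    then have "?F u\<^sub>0 \<le> ?F u"
      using opt u\<^sub>0 that unfolding optimal_on_support_def by blast
    with F_le[OF that] show ?thesis by simp
  next
    case False
    with policy_mass_nonneg[OF \<mu> that] show ?thesis by simp
  qed
  have "(\<Sum>u\<in>?P. policy_mass S \<nu> c u * ?F u) \<le> (\<Sum>u\<in>?P. policy_mass S \<nu> c u * ?F u\<^sub>0)"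
    by (intro sum_mono mult_left_mono F_le policy_mass_nonneg[OF \<nu>])
  also have "\<dots> = m c * ?F u\<^sub>0"
    by (simp add: sum_policy_mass[OF \<nu>] flip: sum_distrib_right)
  also have "\<dots> = (\<Sum>u\<in>?P. policy_mass S \<mu> c u * ?F u)"
    by (simp add: F_support sum_policy_mass[OF \<mu>] flip: sum_distrib_right)
  finally show ?thesis .
qed

lemma msne_variational_inequality:
  assumes lam: "0 \<le> lam" and m: "\<forall>c. 0 < m c" and \<mu>: "MSNE lam S A \<phi> m w \<mu>"
    and \<nu>: "\<nu> \<in> state_policy_dists S A m" "stationary_marginals lam S A \<phi> \<nu>"
  shows "(\<Sum>r\<in>UNIV. w r (resource_flow lam S A \<mu> r) * resource_flow lam S A \<nu> r)
       \<le> (\<Sum>r\<in>UNIV. w r (resource_flow lam S A \<mu> r) * resource_flow lam S A \<mu> r)"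
proof -
  have \<mu>': "\<mu> \<in> state_policy_dists S A m" "optimal_on_support lam S A \<phi> w \<mu>"
    "stationary_marginals lam S A \<phi> \<mu>"
    using \<mu> by (simp_all add: MSNE_iff)
  have "lam * (\<Sum>c\<in>UNIV. \<Sum>u\<in>policies (S c) (A c). policy_mass S \<nu> c u * Fval lam S A \<phi> w \<mu> c u)
      \<le> lam * (\<Sum>c\<in>UNIV. \<Sum>u\<in>policies (S c) (A c). policy_mass S \<mu> c u * Fval lam S A \<phi> w \<mu> c u)"
    using m
    by (intro mult_left_mono[OF sum_mono[OF optimal_on_support_payoff_le[OF \<mu>'(2,1) \<nu>(1)]] lam])
      simp
  then show ?thesis
    by (simp only: payoff_pairing_eq_reward_flow \<mu>'(3) \<nu>(2))
qed

lemma antitone_cross_nonneg: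
  fixes f :: "real \<Rightarrow> real"
  assumes "\<forall>x y. 0 \<le> x \<longrightarrow> x \<le> y \<longrightarrow> f y \<le> f x" "0 \<le> a" "0 \<le> b"
  shows "0 \<le> (f a - f b) * (b - a)"
proof (cases "a \<le> b")
  case True
  with assms show ?thesis by simp
next
  case False
  with assms show ?thesis by (simp add: mult_nonpos_nonpos)
qed

lemma antitone_eq_on_closed_segment:
  fixes f :: "real \<Rightarrow> real"
  assumes anti: "\<forall>x y. 0 \<le> x \<longrightarrow> x \<le> y \<longrightarrow> f y \<le> f x" and "0 \<le> a" "0 \<le> b"
    and "f a = f b" and t: "t \<in> closed_segment a b"
  shows "f t = f a"
proof (cases "a \<le> b")
  case True
  with t have "a \<le> t" "t \<le> b" by (simp_all add: closed_segment_eq_real_ivl)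
  with assms show ?thesis by (metis antisym order_trans)
next
  case False
  with t have "b \<le> t" "t \<le> a" by (simp_all add: closed_segment_eq_real_ivl)
  with assms show ?thesis by (metis antisym order_trans)
qed

lemma msne_flow_or_reward_eq:
  assumes lam: "0 \<le> lam" and m: "\<forall>c. 0 < m c"
    and anti: "\<forall>r x y. 0 \<le> x \<longrightarrow> x \<le> y \<longrightarrow> w r y \<le> w r x"
    and \<mu>: "MSNE lam S A \<phi> m w \<mu>" and \<nu>: "MSNE lam S A \<phi> m w \<nu>"
  shows "resource_flow lam S A \<mu> r = resource_flow lam S A \<nu> r \<or>
    w r (resource_flow lam S A \<mu> r) = w r (resource_flow lam S A \<nu> r)"
proof -
  define a where "a r = resource_flow lam S A \<mu> r" for r
  define b where "b r = resource_flow lam S A \<nu> r" for r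
  define d where "d r = (w r (a r) - w r (b r)) * (b r - a r)" for r
  have \<mu>X: "\<mu> \<in> state_policy_dists S A m" and \<nu>X: "\<nu> \<in> state_policy_dists S A m"
    using \<mu> \<nu> by (simp_all add: MSNE_iff)
  have d_nonneg: "0 \<le> d r" for r
    unfolding d_def a_def b_def
    using anti
    by (intro antitone_cross_nonneg resource_flow_nonneg[OF lam \<mu>X] resource_flow_nonneg[OF lam \<nu>X])
      auto
  have "sum d UNIV = ((\<Sum>r\<in>UNIV. w r (a r) * b r) - (\<Sum>r\<in>UNIV. w r (a r) * a r))
      + ((\<Sum>r\<in>UNIV. w r (b r) * a r) - (\<Sum>r\<in>UNIV. w r (b r) * b r))"
    by (simp add: d_def sum_subtractf algebra_simps flip: sum.distrib)
  also have "\<dots> \<le> 0"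
    using msne_variational_inequality[OF lam m \<mu> \<nu>X] msne_variational_inequality[OF lam m \<nu> \<mu>X]
      \<mu> \<nu> unfolding a_def b_def MSNE_iff by simp
  finally have "d r = 0"
    using d_nonneg sum_nonneg_eq_0_iff[of UNIV d] by (simp add: order_antisym sum_nonneg)
  then show ?thesis
    by (auto simp: d_def a_def b_def)
qed

lemma convex_msne:
  assumes lam: "0 \<le> lam" and m: "\<forall>c. 0 < m c"
    and anti: "\<forall>r x y. 0 \<le> x \<longrightarrow> x \<le> y \<longrightarrow> w r y \<le> w r x"
  shows "convex {\<mu>. MSNE lam S A \<phi> m w \<mu>}"
proof (rule convexI)
  fix \<mu> \<nu> :: "real ^ _" and p q :: real
  assume "\<mu> \<in> {\<mu>. MSNE lam S A \<phi> m w \<mu>}" "\<nu> \<in> {\<mu>. MSNE lam S A \<phi> m w \<mu>}"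
    and pq: "0 \<le> p" "0 \<le> q" "p + q = 1"
  then have \<mu>: "MSNE lam S A \<phi> m w \<mu>" and \<nu>: "MSNE lam S A \<phi> m w \<nu>"
    by simp_all
  then have \<mu>X: "\<mu> \<in> state_policy_dists S A m" and \<nu>X: "\<nu> \<in> state_policy_dists S A m"
    by (simp_all add: MSNE_iff)
  define z where "z = p *\<^sub>R \<mu> + q *\<^sub>R \<nu>"
  have reward_eq: "w r (resource_flow lam S A z r) = w r (resource_flow lam S A \<mu> r)"
    "w r (resource_flow lam S A \<nu> r) = w r (resource_flow lam S A \<mu> r)" for r
  proof -
    have anti_r: "\<forall>x y. 0 \<le> x \<longrightarrow> x \<le> y \<longrightarrow> w r y \<le> w r x"
      using anti by blast
    have eq: "w r (resource_flow lam S A \<mu> r) = w r (resource_flow lam S A \<nu> r)"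
      using msne_flow_or_reward_eq[OF lam m anti \<mu> \<nu>] by metis
    have "resource_flow lam S A z r
        \<in> closed_segment (resource_flow lam S A \<mu> r) (resource_flow lam S A \<nu> r)"
      using pq unfolding z_def resource_flow_combination closed_segment_def
      by (auto intro!: exI[of _ q])
    from antitone_eq_on_closed_segment[OF anti_r resource_flow_nonneg[OF lam \<mu>X]
        resource_flow_nonneg[OF lam \<nu>X] eq this] eq
    show "w r (resource_flow lam S A z r) = w r (resource_flow lam S A \<mu> r)"
      "w r (resource_flow lam S A \<nu> r) = w r (resource_flow lam S A \<mu> r)"
      by simp_all
  qed
  then have F_eq: "Fval lam S A \<phi> w z c u = Fval lam S A \<phi> w \<mu> c u"
    "Fval lam S A \<phi> w \<nu> c u = Fval lam S A \<phi> w \<mu> c u" for c u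
    by (simp_all add: Fval_eq_resource_flow)
  have "optimal_on_support lam S A \<phi> w z"
    unfolding optimal_on_support_def
  proof (intro allI ballI impI)
    fix c u v
    assume u: "u \<in> policies (S c) (A c)" and "0 < policy_mass S z c u"
      and v: "v \<in> policies (S c) (A c)"
    then have "0 < policy_mass S \<mu> c u \<or> 0 < policy_mass S \<nu> c u"
      using pq unfolding z_def policy_mass_combination
      by (smt (verit) mult_nonneg_nonpos)
    then show "Fval lam S A \<phi> w z c v \<le> Fval lam S A \<phi> w z c u"
      using \<mu> \<nu> u v unfolding MSNE_iff optimal_on_support_def F_eq by metis
  qed
  moreover have "z \<in> state_policy_dists S A m"
    unfolding z_def using \<mu>X \<nu>X pq by (intro convexD convex_state_policy_dists)
  moreover have "stationary_marginals lam S A \<phi> z"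
    using convexD[OF convex_stationary_marginals, of \<mu> lam S A \<phi> \<nu> p q] \<mu> \<nu> pq
    unfolding z_def MSNE_iff by simp
  ultimately show "p *\<^sub>R \<mu> + q *\<^sub>R \<nu> \<in> {\<mu>. MSNE lam S A \<phi> m w \<mu>}"
    by (simp add: MSNE_iff z_def)
qed

lemma closed_msne:
  assumes lam: "0 \<le> lam" and w_cont: "\<forall>r. continuous_on {0..} (w r)"
  shows "closed {\<mu>. MSNE lam S A \<phi> m w \<mu>}"
proof -
  \<comment> \<open>w r is only continuous on {0..}; clamping the flow at 0 gives a payoff that is continuous
    everywhere and agrees with Fval on state_policy_dists.\<close>
  define F where "F \<mu> c u = (\<Sum>s\<in>S c. stat_dist lam (S c) (policy_kernel (\<phi> c) u) s *
      (\<Sum>r\<in>u s. w r (max 0 (resource_flow lam S A \<mu> r))))" for \<mu> c u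
  have "Fval lam S A \<phi> w \<mu> c u = F \<mu> c u" if "\<mu> \<in> state_policy_dists S A m" for \<mu> c u
    using resource_flow_nonneg[OF lam that] by (simp add: F_def Fval_eq_resource_flow)
  then have MSNE_eq: "{\<mu>. MSNE lam S A \<phi> m w \<mu>} = state_policy_dists S A m \<inter>
      {\<mu>. \<forall>c u. u \<in> policies (S c) (A c) \<longrightarrow> 0 < policy_mass S \<mu> c u \<longrightarrow>
         (\<forall>v. v \<in> policies (S c) (A c) \<longrightarrow> F \<mu> c v \<le> F \<mu> c u)} \<inter>
      {\<mu>. stationary_marginals lam S A \<phi> \<mu>}"
    by (auto simp: MSNE_iff optimal_on_support_def)
  have cont_F: "continuous_on UNIV (\<lambda>\<mu>. F \<mu> c u)" for c u
  proof -
    have "continuous_on UNIV (\<lambda>\<mu>. if r \<in> u s then \<mu> $ (c, s, u) else 0)" for r u s c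
      by (cases "r \<in> u s") (simp_all add: continuous_on_component)
    then have "continuous_on UNIV (\<lambda>\<mu>. resource_flow lam S A \<mu> r)" for r
      unfolding resource_flow_def by (intro continuous_intros)
    then have "continuous_on UNIV (\<lambda>\<mu>. w r (max 0 (resource_flow lam S A \<mu> r)))" for r
      by (intro continuous_on_compose2[OF w_cont[rule_format]] continuous_intros) auto
    then show ?thesis
      unfolding F_def by (intro continuous_intros)
  qed
  show ?thesis
    unfolding MSNE_eq policy_mass_def
    by (intro closed_Int closed_state_policy_dists closed_stationary_marginals closed_Collect_all
        closed_Collect_imp open_Collect_const closed_Collect_le open_Collect_less cont_F
        continuous_intros)
qed

lemma msne_flow_unique:
  assumes lam: "0 \<le> lam" and m: "\<forall>c. 0 < m c"
    and strict: "\<forall>r x y. 0 \<le> x \<longrightarrow> x < y \<longrightarrow> w r y < w r x"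
    and \<mu>: "MSNE lam S A \<phi> m w \<mu>" and \<nu>: "MSNE lam S A \<phi> m w \<nu>"
  shows "resource_flow lam S A \<mu> r = resource_flow lam S A \<nu> r"
proof -
  have anti: "\<forall>r x y. 0 \<le> x \<longrightarrow> x \<le> y \<longrightarrow> w r y \<le> w r x"
    using strict by (metis order_le_less)
  have "0 \<le> resource_flow lam S A \<mu> r" "0 \<le> resource_flow lam S A \<nu> r"
    using \<mu> \<nu> by (auto simp: MSNE_iff intro: resource_flow_nonneg[OF lam])
  with msne_flow_or_reward_eq[OF lam m anti \<mu> \<nu>, of r] strict show ?thesis
    by (metis linorder_neqE_linordered_idom order_less_irrefl)
qed

theorem corollary1:
  fixes lam :: real
    and S :: "'c::finite \<Rightarrow> 'st::finite set"
    and A :: "'c \<Rightarrow> 'st \<Rightarrow> 'r::finite set set"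
    and \<phi> :: "'c \<Rightarrow> 'st \<Rightarrow> 'r set \<Rightarrow> 'st \<Rightarrow> real"
    and m :: "'c \<Rightarrow> real"
    and w :: "'r \<Rightarrow> real \<Rightarrow> real"
  assumes lam_pos: "lam > 0"
    and mass_pos: "\<forall>c. m c > 0"
    and actions_nonempty: "\<forall>c. \<forall>s\<in>S c. A c s \<noteq> {}"
    and kernel_nonneg: "\<forall>c. \<forall>s\<in>S c. \<forall>a\<in>A c s. \<forall>s'\<in>S c. \<phi> c s a s' \<ge> 0"
    and kernel_sum: "\<forall>c. \<forall>s\<in>S c. \<forall>a\<in>A c s. (\<Sum>s'\<in>S c. \<phi> c s a s') = 1"
    and A2: "\<forall>c. \<forall>u\<in>policies (S c) (A c). one_recurrent_class (S c) (policy_kernel (\<phi> c) u)"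
    and w_C1: "\<forall>r. \<exists>w'. continuous_on {0..} w' \<and>
                 (\<forall>x\<ge>0. (w r has_real_derivative w' x) (at x within {0..}))"
    and w_nonincr: "\<forall>r x y. 0 \<le> x \<longrightarrow> x \<le> y \<longrightarrow> w r y \<le> w r x"
  shows "compact {\<mu>. MSNE lam S A \<phi> m w \<mu>} \<and> convex {\<mu>. MSNE lam S A \<phi> m w \<mu>} \<and>
         ((\<forall>r x y. 0 \<le> x \<longrightarrow> x < y \<longrightarrow> w r y < w r x) \<longrightarrow>
          (\<forall>\<mu> \<nu>. MSNE lam S A \<phi> m w \<mu> \<longrightarrow> MSNE lam S A \<phi> m w \<nu> \<longrightarrow>
             (\<forall>r. flow lam S A (sa_dist S A \<mu>) r = flow lam S A (sa_dist S A \<nu>) r)))"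
proof -
  have lam: "0 \<le> lam"
    using lam_pos by simp
  have w_cont: "\<forall>r. continuous_on {0..} (w r)"
    using w_C1 by (metis DERIV_continuous_on atLeast_iff)
  have "bounded {\<mu>. MSNE lam S A \<phi> m w \<mu>}"
    by (rule bounded_subset[OF bounded_state_policy_dists]) (auto simp: MSNE_iff)
  with closed_msne[OF lam w_cont] have "compact {\<mu>. MSNE lam S A \<phi> m w \<mu>}"
    by (simp add: compact_eq_bounded_closed)
  moreover have "convex {\<mu>. MSNE lam S A \<phi> m w \<mu>}"
    using convex_msne[OF lam mass_pos w_nonincr] .
  moreover have "\<forall>\<mu> \<nu>. MSNE lam S A \<phi> m w \<mu> \<longrightarrow> MSNE lam S A \<phi> m w \<nu> \<longrightarrow>
      (\<forall>r. flow lam S A (sa_dist S A \<mu>) r = flow lam S A (sa_dist S A \<nu>) r)"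
    if "\<forall>r x y. 0 \<le> x \<longrightarrow> x < y \<longrightarrow> w r y < w r x"
    by (auto simp: flow_sa_dist intro: msne_flow_unique[OF lam mass_pos that])
  ultimately show ?thesis
    by blast
qed

end
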